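(* For any $\beta>0$, the mixing time of the column dynamics $\mathcal M^{\mathrm{col}}_n$ is $O(n^3\log n)$.
   Context: Fix $\beta>0$ and an integer $n\ge1$. Configurations are $\eta\in\Omega_n=\{0,\dots,n\}^n$ with boundary values $\eta(0)=\eta(n+1)=0$, and the SOS Gibbs distribution is $\mu(\eta)\propto\exp\{-\beta\sum_{i=1}^{n+1}|\eta(i-1)-\eta(i)|\}$. The column dynamics $\mathcal M^{\mathrm{col}}_n$ is the Markov chain on $\Omega_n$ that, from $\eta$, picks $i\in\{1,\dots,n\}$ uniformly at random and replaces $\eta(i)$ by $j\in\{0,\dots,n\}$ with probability proportional to $\mu(\eta^j)$, where $\eta^j$ is $\eta$ with $\eta(i)$ replaced by $j$. Mixing time: $\tau^{\mathrm{mix}}=\min\{t:\|\nu_t^\xi-\mu\|_{TV}\le 1/(2e)\ \forall\xi\in\Omega_n\}$, with $\nu_t^\xi$ the law at time $t$ started at $\xi$. *)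

theory Defs
  imports "HOL-Analysis.Analysis" "HOL-Library.Landau_Symbols"
begin

text \<open>Configurations: eta :: nat => nat with eta i in {0..n} for i in {1..n}
  and eta i = 0 otherwise (in particular the boundary values eta 0 = eta (n+1) = 0).\<close>
definition sos_Omega :: "nat \<Rightarrow> (nat \<Rightarrow> nat) set" where
  "sos_Omega n = {\<eta>. (\<forall>i\<in>{1..n}. \<eta> i \<le> n) \<and> (\<forall>i. i \<notin> {1..n} \<longrightarrow> \<eta> i = 0)}"

definition sos_weight :: "real \<Rightarrow> nat \<Rightarrow> (nat \<Rightarrow> nat) \<Rightarrow> real" where
  "sos_weight \<beta> n \<eta> =
     exp (- \<beta> * (\<Sum>i=1..n+1. \<bar>real (\<eta> (i - 1)) - real (\<eta> i)\<bar>))"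

definition sos_mu :: "real \<Rightarrow> nat \<Rightarrow> (nat \<Rightarrow> nat) \<Rightarrow> real" where
  "sos_mu \<beta> n \<eta> =
     (if \<eta> \<in> sos_Omega n
      then sos_weight \<beta> n \<eta> / (\<Sum>\<zeta>\<in>sos_Omega n. sos_weight \<beta> n \<zeta>) else 0)"

text \<open>Transition probability of the column dynamics from eta to xi: pick column i
  uniformly in {1..n}, resample its height j in {0..n} proportionally to mu(eta^j).\<close>
definition col_P :: "real \<Rightarrow> nat \<Rightarrow> (nat \<Rightarrow> nat) \<Rightarrow> (nat \<Rightarrow> nat) \<Rightarrow> real" where
  "col_P \<beta> n \<eta> \<xi> =
     (\<Sum>i=1..n. (1 / real n) *
        (\<Sum>j=0..n. (if \<xi> = \<eta>(i := j) then
           sos_mu \<beta> n (\<eta>(i := j)) / (\<Sum>k=0..n. sos_mu \<beta> n (\<eta>(i := k))) else 0)))"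

fun col_law :: "real \<Rightarrow> nat \<Rightarrow> nat \<Rightarrow> (nat \<Rightarrow> nat) \<Rightarrow> (nat \<Rightarrow> nat) \<Rightarrow> real" where
  "col_law \<beta> n 0 \<xi> \<eta> = (if \<eta> = \<xi> then 1 else 0)"
| "col_law \<beta> n (Suc t) \<xi> \<eta> =
     (\<Sum>\<zeta>\<in>sos_Omega n. col_law \<beta> n t \<xi> \<zeta> * col_P \<beta> n \<zeta> \<eta>)"

definition tv_dist :: "nat \<Rightarrow> ((nat \<Rightarrow> nat) \<Rightarrow> real) \<Rightarrow> ((nat \<Rightarrow> nat) \<Rightarrow> real) \<Rightarrow> real" where
  "tv_dist n p q = (1/2) * (\<Sum>\<eta>\<in>sos_Omega n. \<bar>p \<eta> - q \<eta>\<bar>)"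

definition col_mixing_time :: "real \<Rightarrow> nat \<Rightarrow> nat" where
  "col_mixing_time \<beta> n =
     (LEAST t. \<forall>\<xi>\<in>sos_Omega n.
        tv_dist n (col_law \<beta> n t \<xi>) (sos_mu \<beta> n) \<le> 1 / (2 * exp 1))"

end

theory Submission
  imports Defs
begin

text \<open>Path coupling, phrased through Lipschitz functions. Measure the distance between configurations
  by \<open>\<Sum>k. k (n + 1 - k) \<bar>\<eta> k - \<eta>' k\<bar>\<close>. For two configurations differing by one at column \<open>i\<close>, a step
  that resamples column \<open>i\<close> makes them agree, a step elsewhere keeps the discrepancy, and a step
  at a neighbouring column adds at most half of that column's weight, because raising one
  neighbour by one moves the mean of the heat-bath law of a column by at most \<open>1/2\<close>. Concavity of
  \<open>k (n + 1 - k)\<close> turns this into a contraction of Lipschitz constants by \<open>1 - 1/n\<^sup>3\<close> per step.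
  Distinct configurations are at distance at least \<open>n\<close> and the diameter is at most \<open>n\<^sup>4\<close>, so the
  total variation distance after \<open>t\<close> steps is at most \<open>n\<^sup>3 (1 - 1/n\<^sup>3)\<^sup>t\<close>.\<close>

section \<open>An inequality between geometric sums\<close>

lemma geom_sum_closed:
  fixes y :: "'a::comm_ring_1"
  shows "(1-y) * (\<Sum>k=1..p. y^k) = y - y^(p+1)"
proof (induction p)
  case (Suc p)
  have "(1-y) * (\<Sum>k=1..Suc p. y^k) = (1-y) * (\<Sum>k=1..p. y^k) + (1-y) * y^Suc p"
    by (simp add: algebra_simps)
  also have "\<dots> = y - y^(Suc p + 1)"
    unfolding Suc.IH by (simp add: algebra_simps)
  finally show ?case .
qed simp

lemma geom_moment_closed:
  fixes y :: "'a::comm_ring_1"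
  shows "(1-y) * (\<Sum>k=1..p. of_nat k * y^k) = (\<Sum>k=1..p. y^k) - of_nat p * y^(p+1)"
proof (induction p)
  case (Suc p)
  have "(1-y) * (\<Sum>k=1..Suc p. of_nat k * y^k)
      = (1-y) * (\<Sum>k=1..p. of_nat k * y^k) + (1-y) * (of_nat (Suc p) * y^Suc p)"
    by (simp add: algebra_simps)
  also have "\<dots> = (\<Sum>k=1..Suc p. y^k) - of_nat (Suc p) * y^(Suc p + 1)"
    unfolding Suc.IH by (simp add: algebra_simps)
  finally show ?case .
qed simp

text \<open>\<open>P\<close> and \<open>Q\<close> stand for \<open>\<Sum>k=1..p. y\<^sup>k\<close> and \<open>\<Sum>k=1..p. k y\<^sup>k\<close> (similarly \<open>B\<close>, \<open>G\<close> with \<open>R\<close>),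
  given through their closed forms. Multiplied by \<open>(1 - y)\<^sup>2\<close>, the difference of the two sides
  becomes the visibly nonnegative \<open>e\<close>.\<close>

lemma plateau_moment_ineq_low:
  fixes y L P B Q G q r p R :: real
  assumes y: "0 < y" "y < 1" and q: "0 \<le> q" "q \<le> y" and r: "0 \<le> r" "r \<le> y"
    and L: "L \<ge> 0" and p: "p \<ge> 0" and R: "R \<ge> 1"
    and hP: "(1-y)*P = y - q" and hB: "(1-y)*B = y - r" and hQ: "(1-y)*Q = P - p*q"
    and hG: "(1-y)*G = B - R*r"
  shows "2*(1-y)*(B*(L*(L-1)/2 + (L-1)*P + Q) + (L+P)*G) \<le> ((L+P)+B)*(y*(L+P)+B)"
proof -
  define z where "z = 1 - y"
  have ne: "z \<noteq> 0" using y by (simp add: z_def)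
  have yz: "y = 1 - z" by (simp add: z_def)
  have P: "P = (y-q)/z" using hP ne by (simp add: field_simps z_def)
  have B: "B = (y-r)/z" using hB ne by (simp add: field_simps z_def)
  have Q: "Q = (P-p*q)/z" using hQ ne by (simp add: field_simps z_def)
  have G: "G = (B-R*r)/z" using hG ne by (simp add: field_simps z_def)
  define e where "e = (1-y)^2*r*L*L+(1-y)*L*(2*r*(y-q)+2*R*r*(1-y))+(r-q)^2+(1-y)*(q+r)*(y-q)
     +2*(R-1)*r*(1-y)*(y-q)+2*p*q*(1-y)*(y-r)"
  have e0: "e \<ge> 0" unfolding e_def using y q r L p R
    by (intro add_nonneg_nonneg mult_nonneg_nonneg) auto
  have "(1-y)^2 * (((L+P)+B)*(y*(L+P)+B) - 2*(1-y)*(B*(L*(L-1)/2 + (L-1)*P + Q) + (L+P)*G)) = e"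
    unfolding e_def Q G unfolding P B yz using ne
    by (simp add: field_simps) (simp add: algebra_simps power2_eq_square)
  with e0 y have "((L+P)+B)*(y*(L+P)+B) - 2*(1-y)*(B*(L*(L-1)/2 + (L-1)*P + Q) + (L+P)*G) \<ge> 0"
    by (metis zero_le_mult_iff not_le less_le zero_less_power2 diff_gt_0_iff_gt)
  then show ?thesis by simp
qed

lemma plateau_moment_ineq_high:
  fixes y M P B Q G q r p R :: real
  assumes y: "0 < y" "y < 1" and q: "0 \<le> q" "q \<le> y" and r: "0 \<le> r" "r \<le> y"
    and M: "M \<ge> 0" and p: "p \<ge> 0" and R: "R \<ge> 0"
    and hP: "(1-y)*P = y - q" and hB: "(1-y)*B = y - r" and hQ: "(1-y)*Q = P - p*q"
    and hG: "(1-y)*G = B - R*r"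
  shows "2*(1-y)*((M+B)*Q + (1+P)*(M*(M+1)/2+M*B+G)) \<le> ((1+P)+(M+B))*(y*(1+P)+(M+B))"
proof -
  define z where "z = 1 - y"
  have ne: "z \<noteq> 0" using y by (simp add: z_def)
  have yz: "y = 1 - z" by (simp add: z_def)
  have P: "P = (y-q)/z" using hP ne by (simp add: field_simps z_def)
  have B: "B = (y-r)/z" using hB ne by (simp add: field_simps z_def)
  have Q: "Q = (P-p*q)/z" using hQ ne by (simp add: field_simps z_def)
  have G: "G = (B-R*r)/z" using hG ne by (simp add: field_simps z_def)
  define e where "e = (1-y)^2*q*M*M+(1-y)*M*(2*q*(1-r)+2*p*q*(1-y))+(r-q)^2+(1-y)*(q*(y-q)+r*(1-q))
     +2*p*q*(1-y)*(y-r)+2*R*r*(1-y)*(1-q)"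
  have e0: "e \<ge> 0" unfolding e_def using y q r M p R
    by (intro add_nonneg_nonneg mult_nonneg_nonneg) auto
  have "(1-y)^2 * (((1+P)+(M+B))*(y*(1+P)+(M+B)) - 2*(1-y)*((M+B)*Q + (1+P)*(M*(M+1)/2+M*B+G))) = e"
    unfolding e_def Q G unfolding P B yz using ne
    by (simp add: field_simps) (simp add: algebra_simps power2_eq_square)
  with e0 y have "((1+P)+(M+B))*(y*(1+P)+(M+B)) - 2*(1-y)*((M+B)*Q + (1+P)*(M*(M+1)/2+M*B+G)) \<ge> 0"
    by (metis zero_le_mult_iff not_le less_le zero_less_power2 diff_gt_0_iff_gt)
  then show ?thesis by simp
qed

lemma plateau_moment_ineq:
  fixes y L M P B Q G q r p R :: real
  assumes y: "0 < y" "y < 1" and q: "0 \<le> q" "q \<le> y" and r: "0 \<le> r" "r \<le> y"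
    and L: "L \<ge> 1" and M: "M \<ge> 0" and p: "p \<ge> 0" and R: "R \<ge> 0"
    and LM: "L = 1 \<or> M = 0" and MR: "M = 0 \<Longrightarrow> R \<ge> 1"
    and hP: "(1-y)*P = y - q" and hB: "(1-y)*B = y - r" and hQ: "(1-y)*Q = P - p*q"
    and hG: "(1-y)*G = B - R*r"
  shows "2*(1-y)*((M+B)*(L*(L-1)/2+(L-1)*P+Q) + (L+P)*(M*(M+1)/2+M*B+G))
     \<le> ((L+P)+(M+B))*(y*(L+P)+(M+B))"
proof (cases "M = 0")
  case True
  then show ?thesis
    using plateau_moment_ineq_low[OF y q r _ p MR[OF True] hP hB hQ hG, of L] L by simp
next
  case False
  then have "L = 1" using LM by simp
  then show ?thesis using plateau_moment_ineq_high[OF y q r M p R hP hB hQ hG] by simp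
qed

definition plateau :: "real \<Rightarrow> nat \<Rightarrow> nat \<Rightarrow> real" where
  "plateau y L s = (if s < L then 1 else y^(s-L+1))"

lemma sum_plateau: "(\<Sum>s<L+p. plateau y L s) = real L + (\<Sum>k=1..p. y^k)"
proof (induction p)
  case (Suc p)
  have "plateau y L (L+p) = y^(Suc p)" by (simp add: plateau_def)
  then show ?case using Suc by simp
qed (simp add: plateau_def)

lemma sum_plateau_moment:
  "(\<Sum>s<L+p. real s * plateau y L s)
     = real L*(real L-1)/2 + (real L-1)*(\<Sum>k=1..p. y^k) + (\<Sum>k=1..p. real k * y^k)"
proof (induction p)
  case 0
  have "(\<Sum>s<L. real s) = real L * (real L - 1)/2"
    by (induction L) (simp_all add: algebra_simps)
  then show ?case by (simp add: plateau_def)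
next
  case (Suc p)
  have "plateau y L (L+p) = y^(Suc p)" by (simp add: plateau_def)
  then show ?case using Suc by (simp add: algebra_simps)
qed

section \<open>The heat-bath law of a single column\<close>

definition heat_bath_weight :: "real \<Rightarrow> nat \<Rightarrow> nat \<Rightarrow> nat \<Rightarrow> real" where
  "heat_bath_weight \<beta> a b j = exp (-\<beta> * (\<bar>real a - real j\<bar> + \<bar>real j - real b\<bar>))"

definition heat_bath_prob :: "real \<Rightarrow> nat \<Rightarrow> nat \<Rightarrow> nat \<Rightarrow> nat \<Rightarrow> real" where
  "heat_bath_prob \<beta> n a b j = heat_bath_weight \<beta> a b j / (\<Sum>k=0..n. heat_bath_weight \<beta> a b k)"

lemma heat_bath_weight_pos: "heat_bath_weight \<beta> a b j > 0"
  by (simp add: heat_bath_weight_def)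

lemma heat_bath_weight_commute: "heat_bath_weight \<beta> a b = heat_bath_weight \<beta> b a"
  unfolding heat_bath_weight_def by (auto simp: abs_minus_commute add.commute)

lemma heat_bath_prob_commute: "heat_bath_prob \<beta> n a b = heat_bath_prob \<beta> n b a"
  unfolding heat_bath_prob_def heat_bath_weight_commute[of \<beta> a b] ..

lemma heat_bath_prob_nonneg: "heat_bath_prob \<beta> n a b j \<ge> 0"
  unfolding heat_bath_prob_def using heat_bath_weight_pos
  by (intro divide_nonneg_nonneg sum_nonneg) (auto intro: less_imp_le)

lemma sum_heat_bath_prob: "(\<Sum>j=0..n. heat_bath_prob \<beta> n a b j) = 1"
proof -
  have "(\<Sum>k=0..n. heat_bath_weight \<beta> a b k) > 0" using heat_bath_weight_pos by (intro sum_pos) auto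
  then show ?thesis unfolding heat_bath_prob_def by (simp add: sum_divide_distrib[symmetric])
qed

lemma heat_bath_weight_excess:
  assumes "\<bar>real a - real j\<bar> + \<bar>real j - real b\<bar> = \<bar>real a - real b\<bar> + 2*real k"
  shows "heat_bath_weight \<beta> a b j = exp (-\<beta>*\<bar>real a - real b\<bar>) * exp (-2*\<beta>)^k"
proof -
  have "heat_bath_weight \<beta> a b j = exp (-\<beta>*\<bar>real a - real b\<bar> + real k * (-2*\<beta>))"
    unfolding heat_bath_weight_def assms by (simp add: algebra_simps)
  also have "\<dots> = exp (-\<beta>*\<bar>real a - real b\<bar>) * exp (-2*\<beta>)^k"
    by (subst exp_add) (simp only: exp_of_nat_mult)
  finally show ?thesis .
qed

text \<open>Seen from \<open>a\<close>, the weight is constant between \<open>a\<close> and \<open>b\<close> and decays with ratio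
  \<open>exp (-2 * \<beta>)\<close> beyond them.\<close>

lemma heat_bath_weight_below:
  assumes "s \<le> a"
  shows "heat_bath_weight \<beta> a b (a - s)
    = exp (-\<beta>*\<bar>real a - real b\<bar>) * plateau (exp (-2*\<beta>)) (if b \<le> a then a - b + 1 else 1) s"
proof (cases "s < (if b \<le> a then a - b + 1 else 1)")
  case True
  have "\<bar>real a - real (a-s)\<bar> + \<bar>real (a-s) - real b\<bar> = \<bar>real a - real b\<bar> + 2*real 0"
    using True assms by (auto split: if_splits simp: of_nat_diff abs_if)
  then show ?thesis using True by (simp add: heat_bath_weight_excess plateau_def del: of_nat_0)
next
  case False
  have "\<bar>real a - real (a-s)\<bar> + \<bar>real (a-s) - real b\<bar>
      = \<bar>real a - real b\<bar> + 2*real (s - (if b \<le> a then a - b + 1 else 1) + 1)"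
    using False assms by (auto split: if_splits simp: of_nat_diff abs_if)
  then show ?thesis using False by (simp only: heat_bath_weight_excess plateau_def if_False)
qed

lemma heat_bath_weight_above:
  assumes "1 \<le> t"
  shows "heat_bath_weight \<beta> a b (a + t)
    = exp (-\<beta>*\<bar>real a - real b\<bar>) * plateau (exp (-2*\<beta>)) ((if b \<le> a then 0 else b - a) + 1) t"
proof (cases "t < (if b \<le> a then 0 else b - a) + 1")
  case True
  have "\<bar>real a - real (a+t)\<bar> + \<bar>real (a+t) - real b\<bar> = \<bar>real a - real b\<bar> + 2*real 0"
    using True assms by (auto split: if_splits simp: of_nat_diff abs_if)
  then show ?thesis using True by (simp add: heat_bath_weight_excess plateau_def del: of_nat_0)
next
  case False
  have "\<bar>real a - real (a+t)\<bar> + \<bar>real (a+t) - real b\<bar>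
      = \<bar>real a - real b\<bar> + 2*real (t - ((if b \<le> a then 0 else b - a) + 1) + 1)"
    using False assms by (auto split: if_splits simp: of_nat_diff abs_if)
  then show ?thesis using False by (simp only: heat_bath_weight_excess plateau_def if_False)
qed

lemma heat_bath_sums_below:
  assumes y: "y = exp (-2*\<beta>)" and c: "c = exp (-\<beta>*\<bar>real a - real b\<bar>)"
    and L: "L = (if b \<le> a then a - b + 1 else 1)" and p: "p = a + 1 - L"
  shows "(\<Sum>j=0..a. heat_bath_weight \<beta> a b j) = c * (real L + (\<Sum>k=1..p. y^k))"
    and "(\<Sum>j=0..a. heat_bath_weight \<beta> a b j * (real a - real j))
       = c * (real L*(real L-1)/2 + (real L-1)*(\<Sum>k=1..p. y^k) + (\<Sum>k=1..p. real k * y^k))"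
proof -
  have Lp: "L + p = Suc a" using L p by auto
  have reverse: "(\<Sum>j=0..a. f j) = (\<Sum>s<L+p. f (a - s))" for f :: "nat \<Rightarrow> real"
  proof -
    have "(\<Sum>j=0..a. f j) = (\<Sum>s=0..a. f (a + 0 - s))" by (rule sum.atLeastAtMost_rev)
    moreover have "{0..a} = {..<L+p}" using Lp by auto
    ultimately show ?thesis by simp
  qed
  have w: "heat_bath_weight \<beta> a b (a - s) = c * plateau y L s" if "s < L + p" for s
    using heat_bath_weight_below[of s a \<beta> b] that Lp unfolding c y L by simp
  have "(\<Sum>j=0..a. heat_bath_weight \<beta> a b j) = (\<Sum>s<L+p. c * plateau y L s)"
    unfolding reverse by (rule sum.cong) (auto simp: w)
  then show "(\<Sum>j=0..a. heat_bath_weight \<beta> a b j) = c * (real L + (\<Sum>k=1..p. y^k))"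
    by (simp add: sum_distrib_left[symmetric] sum_plateau)
  have "(\<Sum>j=0..a. heat_bath_weight \<beta> a b j * (real a - real j))
      = (\<Sum>s<L+p. c * (real s * plateau y L s))"
    unfolding reverse by (rule sum.cong) (auto simp: w Lp of_nat_diff)
  then show "(\<Sum>j=0..a. heat_bath_weight \<beta> a b j * (real a - real j))
       = c * (real L*(real L-1)/2 + (real L-1)*(\<Sum>k=1..p. y^k) + (\<Sum>k=1..p. real k * y^k))"
    by (simp add: sum_distrib_left[symmetric] sum_plateau_moment)
qed

lemma heat_bath_sums_above:
  assumes an: "a < n" and bn: "b \<le> n"
    and y: "y = exp (-2*\<beta>)" and c: "c = exp (-\<beta>*\<bar>real a - real b\<bar>)"
    and M: "M = (if b \<le> a then 0 else b - a)" and R: "R = n - a - M"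
  shows "(\<Sum>j=Suc a..n. heat_bath_weight \<beta> a b j) = c * (real M + (\<Sum>k=1..R. y^k))"
    and "(\<Sum>j=Suc a..n. heat_bath_weight \<beta> a b j * (real j - real a))
       = c * (real M*(real M+1)/2 + real M*(\<Sum>k=1..R. y^k) + (\<Sum>k=1..R. real k * y^k))"
proof -
  have MR: "M + 1 + R = Suc (n - a)" using an bn M R by auto
  have shift: "(\<Sum>j=Suc a..n. f j) = (\<Sum>t<M+1+R. f (t + a)) - f a" for f :: "nat \<Rightarrow> real"
  proof -
    have "(\<Sum>j=1+a..(n-a)+a. f j) = (\<Sum>t=1..n-a. f (t + a))" by (rule sum.shift_bounds_cl_nat_ivl)
    moreover have "{..<M+1+R} = insert 0 {1..n-a}" using MR by auto
    ultimately show ?thesis using an by simp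
  qed
  have w0: "heat_bath_weight \<beta> a b a = c * plateau y (M+1) 0"
    unfolding c heat_bath_weight_def plateau_def by simp
  have w: "heat_bath_weight \<beta> a b (t + a) = c * plateau y (M+1) t" for t
  proof (cases "t = 0")
    case False
    then show ?thesis
      using heat_bath_weight_above[of t \<beta> a b] unfolding c y M by (simp add: add.commute)
  qed (simp add: w0)
  have "(\<Sum>t<M+1+R. heat_bath_weight \<beta> a b (t + a)) = (\<Sum>t<M+1+R. c * plateau y (M+1) t)"
    by (simp only: w)
  also have "\<dots> = c * (\<Sum>t<M+1+R. plateau y (M+1) t)"
    by (rule sum_distrib_left[symmetric])
  also have "\<dots> = c * (real (M+1) + (\<Sum>k=1..R. y^k))"
    by (simp only: sum_plateau)
  finally have sum_shifted: "(\<Sum>t<M+1+R. heat_bath_weight \<beta> a b (t + a)) = c * (real (M+1) + (\<Sum>k=1..R. y^k))" .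
  show "(\<Sum>j=Suc a..n. heat_bath_weight \<beta> a b j) = c * (real M + (\<Sum>k=1..R. y^k))"
    unfolding shift sum_shifted w0 by (simp add: plateau_def algebra_simps)
  have "(\<Sum>t<M+1+R. heat_bath_weight \<beta> a b (t + a) * (real (t + a) - real a))
      = c * (\<Sum>t<M+1+R. real t * plateau y (M+1) t)"
    unfolding sum_distrib_left by (intro sum.cong refl) (simp add: w)
  also have "\<dots> = c * (real (M+1)*(real (M+1)-1)/2 + (real (M+1)-1)*(\<Sum>k=1..R. y^k)
      + (\<Sum>k=1..R. real k * y^k))"
    by (simp only: sum_plateau_moment)
  finally show "(\<Sum>j=Suc a..n. heat_bath_weight \<beta> a b j * (real j - real a))
       = c * (real M*(real M+1)/2 + real M*(\<Sum>k=1..R. y^k) + (\<Sum>k=1..R. real k * y^k))"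
    unfolding shift by (simp add: algebra_simps)
qed

lemma heat_bath_moment_ineq:
  fixes \<beta> :: real and a b n :: nat
  assumes \<beta>: "\<beta> > 0" and an: "a < n" and bn: "b \<le> n"
  defines "y \<equiv> exp (-2*\<beta>)" and "w \<equiv> heat_bath_weight \<beta> a b"
  defines "A \<equiv> (\<Sum>j=0..a. w j)" and "B \<equiv> (\<Sum>j=Suc a..n. w j)"
    and "U \<equiv> (\<Sum>j=0..a. w j * (real a - real j))" and "V \<equiv> (\<Sum>j=Suc a..n. w j * (real j - real a))"
  shows "2*(1-y)*(B*U + A*V) \<le> (A+B)*(y*A+B)"
proof -
  define c where "c = exp (-\<beta>*\<bar>real a - real b\<bar>)"
  define L where "L = (if b \<le> a then a - b + 1 else 1)"
  define M where "M = (if b \<le> a then 0 else b - a)"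
  define p where "p = a + 1 - L"
  define R where "R = n - a - M"
  define P where "P = (\<Sum>k=1..p. y^k)"
  define Q where "Q = (\<Sum>k=1..p. real k * y^k)"
  define S where "S = (\<Sum>k=1..R. y^k)"
  define T where "T = (\<Sum>k=1..R. real k * y^k)"
  have y: "y = exp (-2*\<beta>)" by (simp add: y_def)
  have y01: "0 < y" "y < 1" using \<beta> by (simp_all add: y_def)
  have A: "A = c * (real L + P)" and U: "U = c * (real L*(real L-1)/2 + (real L-1)*P + Q)"
    unfolding A_def U_def w_def P_def Q_def using heat_bath_sums_below[OF y c_def L_def p_def] by simp_all
  have B: "B = c * (real M + S)" and V: "V = c * (real M*(real M+1)/2 + real M*S + T)"
    unfolding B_def V_def w_def S_def T_def using heat_bath_sums_above[OF an bn y c_def M_def R_def] by simp_all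
  have core: "2*(1-y)*((real M+S)*(real L*(real L-1)/2+(real L-1)*P+Q) + (real L+P)*(real M*(real M+1)/2+real M*S+T))
     \<le> ((real L+P)+(real M+S))*(y*(real L+P)+(real M+S))"
  proof (rule plateau_moment_ineq[where q="y^(p+1)" and r="y^(R+1)" and p="real p" and R="real R"])
    show "y^(p+1) \<le> y" "y^(R+1) \<le> y" using y01 by (simp_all add: power_le_one mult_left_le)
    show "real L = 1 \<or> real M = 0" by (simp add: L_def M_def)
    show "real M = 0 \<Longrightarrow> 1 \<le> real R" using an by (simp add: M_def R_def split: if_splits)
  qed (use y01 geom_sum_closed geom_moment_closed in \<open>auto simp: L_def P_def Q_def S_def T_def\<close>)
  have "2*(1-y)*(B*U + A*V) = c^2 * (2*(1-y)*((real M+S)*(real L*(real L-1)/2+(real L-1)*P+Q)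
      + (real L+P)*(real M*(real M+1)/2+real M*S+T)))"
    unfolding A B U V by (simp add: power2_eq_square algebra_simps)
  also have "\<dots> \<le> c^2 * (((real L+P)+(real M+S))*(y*(real L+P)+(real M+S)))"
    using core by (intro mult_left_mono) auto
  also have "\<dots> = (A+B)*(y*A+B)"
    unfolding A B by (simp add: power2_eq_square algebra_simps)
  finally show ?thesis .
qed

lemma cross_sum_lipschitz_le:
  fixes e G :: "nat \<Rightarrow> real"
  assumes e: "\<And>j. e j \<ge> 0"
    and G: "\<And>i j. i \<le> a \<Longrightarrow> a < j \<Longrightarrow> j \<le> n \<Longrightarrow> \<bar>G j - G i\<bar> \<le> C * (real j - real i)"
  shows "\<bar>(\<Sum>i=0..a. e i) * (\<Sum>j=Suc a..n. e j * G j) - (\<Sum>j=Suc a..n. e j) * (\<Sum>i=0..a. e i * G i)\<bar>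
    \<le> C * ((\<Sum>j=Suc a..n. e j) * (\<Sum>i=0..a. e i * (real a - real i))
          + (\<Sum>i=0..a. e i) * (\<Sum>j=Suc a..n. e j * (real j - real a)))"
proof -
  have "(\<Sum>i=0..a. e i) * (\<Sum>j=Suc a..n. e j * G j) - (\<Sum>j=Suc a..n. e j) * (\<Sum>i=0..a. e i * G i)
      = (\<Sum>i=0..a. \<Sum>j=Suc a..n. e i * e j * (G j - G i))"
  proof -
    have "(\<Sum>i=0..a. e i) * (\<Sum>j=Suc a..n. e j * G j) = (\<Sum>i=0..a. \<Sum>j=Suc a..n. e i * (e j * G j))"
      by (rule sum_product)
    moreover have "(\<Sum>j=Suc a..n. e j) * (\<Sum>i=0..a. e i * G i) = (\<Sum>i=0..a. \<Sum>j=Suc a..n. e i * G i * e j)"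
      by (subst mult.commute) (rule sum_product)
    ultimately have "(\<Sum>i=0..a. e i) * (\<Sum>j=Suc a..n. e j * G j) - (\<Sum>j=Suc a..n. e j) * (\<Sum>i=0..a. e i * G i)
        = (\<Sum>i=0..a. (\<Sum>j=Suc a..n. e i * (e j * G j)) - (\<Sum>j=Suc a..n. e i * G i * e j))"
      by (simp only: sum_subtractf)
    also have "\<dots> = (\<Sum>i=0..a. \<Sum>j=Suc a..n. e i * e j * (G j - G i))"
      by (intro sum.cong refl) (simp add: sum_subtractf[symmetric] algebra_simps)
    finally show ?thesis .
  qed
  also have "\<bar>\<dots>\<bar> \<le> (\<Sum>i=0..a. \<Sum>j=Suc a..n. e i * e j * (C * (real j - real i)))"
  proof (rule order_trans[OF sum_abs sum_mono])
    fix i assume i: "i \<in> {0..a}"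
    have "\<bar>e i * e j * (G j - G i)\<bar> \<le> e i * e j * (C * (real j - real i))" if j: "j \<in> {Suc a..n}" for j
      using G[of i j] i j e[of i] e[of j] by (simp add: abs_mult mult_left_mono)
    then show "\<bar>\<Sum>j=Suc a..n. e i * e j * (G j - G i)\<bar> \<le> (\<Sum>j=Suc a..n. e i * e j * (C * (real j - real i)))"
      by (intro order_trans[OF sum_abs sum_mono])
  qed
  also have "\<dots> = C * ((\<Sum>j=Suc a..n. e j) * (\<Sum>i=0..a. e i * (real a - real i))
          + (\<Sum>i=0..a. e i) * (\<Sum>j=Suc a..n. e j * (real j - real a)))"
  proof -
    have "(\<Sum>j=Suc a..n. e j) * (\<Sum>i=0..a. e i * (real a - real i))
        = (\<Sum>i=0..a. \<Sum>j=Suc a..n. e i * (real a - real i) * e j)"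
      by (subst mult.commute) (rule sum_product)
    moreover have "(\<Sum>i=0..a. e i) * (\<Sum>j=Suc a..n. e j * (real j - real a))
        = (\<Sum>i=0..a. \<Sum>j=Suc a..n. e i * (e j * (real j - real a)))"
      by (rule sum_product)
    ultimately have "(\<Sum>j=Suc a..n. e j) * (\<Sum>i=0..a. e i * (real a - real i))
          + (\<Sum>i=0..a. e i) * (\<Sum>j=Suc a..n. e j * (real j - real a))
        = (\<Sum>i=0..a. \<Sum>j=Suc a..n. e i * (real a - real i) * e j + e i * (e j * (real j - real a)))"
      by (simp only: sum.distrib)
    also have "\<dots> = (\<Sum>i=0..a. \<Sum>j=Suc a..n. e i * e j * (real j - real i))"
      by (intro sum.cong refl) (simp add: algebra_simps)
    finally show ?thesis
      by (simp only: sum_distrib_left) (intro sum.cong refl, simp add: algebra_simps)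
  qed
  finally show ?thesis .
qed

lemma heat_bath_weight_Suc:
  "heat_bath_weight \<beta> (Suc a) b j = (if j \<le> a then exp (-\<beta>) else exp \<beta>) * heat_bath_weight \<beta> a b j"
proof -
  have "\<bar>real (Suc a) - real j\<bar> = \<bar>real a - real j\<bar> + (if j \<le> a then 1 else -1)" by auto
  then show ?thesis unfolding heat_bath_weight_def by (simp add: algebra_simps flip: exp_add)
qed

lemma heat_bath_mean_Suc:
  fixes \<beta> :: real and a b n :: nat and G :: "nat \<Rightarrow> real"
  assumes an: "a < n"
  defines "y \<equiv> exp (-2*\<beta>)" and "w \<equiv> heat_bath_weight \<beta> a b"
  shows "(\<Sum>j=0..n. heat_bath_prob \<beta> n (Suc a) b j * G j)
    = (y * (\<Sum>j=0..a. w j * G j) + (\<Sum>j=Suc a..n. w j * G j)) / (y * (\<Sum>j=0..a. w j) + (\<Sum>j=Suc a..n. w j))"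
proof -
  have shifted: "(\<Sum>j=0..n. heat_bath_weight \<beta> (Suc a) b j * f j)
      = exp \<beta> * (y * (\<Sum>j=0..a. w j * f j) + (\<Sum>j=Suc a..n. w j * f j))" for f
  proof -
    have "exp (-\<beta>) = exp \<beta> * y" by (simp add: y_def flip: exp_add)
    then show ?thesis
      using sum.ub_add_nat[of 0 a "\<lambda>j. heat_bath_weight \<beta> (Suc a) b j * f j" "n - a"] an
      unfolding heat_bath_weight_Suc w_def by (simp add: sum_distrib_left algebra_simps)
  qed
  show ?thesis
    using shifted[of G] shifted[of "\<lambda>_. 1"] unfolding heat_bath_prob_def
    by (simp add: sum_divide_distrib[symmetric])
qed

text \<open>Raising the left neighbour multiplies the weights at heights \<open>\<le> a\<close> by \<open>exp (-\<beta>)\<close> and the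
  others by \<open>exp \<beta>\<close>. The mean of \<open>G\<close> then moves by \<open>(1 - y) (A G\<^sub>R - B G\<^sub>L) / ((A + B) (y A + B))\<close>, and
  pairing heights below and above \<open>a\<close> bounds this by \<open>C\<close> times the same expression for the
  identity, which is at most \<open>1/2\<close> by the moment inequality.\<close>

lemma heat_bath_mean_shift_le:
  fixes \<beta> C :: real and a b n :: nat and G :: "nat \<Rightarrow> real"
  assumes \<beta>: "\<beta> > 0" and an: "a < n" and bn: "b \<le> n"
    and G: "\<And>j j'. j \<le> n \<Longrightarrow> j' \<le> n \<Longrightarrow> \<bar>G j - G j'\<bar> \<le> C * \<bar>real j - real j'\<bar>"
  shows "\<bar>(\<Sum>j=0..n. heat_bath_prob \<beta> n (Suc a) b j * G j) - (\<Sum>j=0..n. heat_bath_prob \<beta> n a b j * G j)\<bar>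
    \<le> C / 2"
proof -
  define y where "y = exp (-2*\<beta>)"
  define e where "e = heat_bath_weight \<beta> a b"
  define A where "A = (\<Sum>j=0..a. e j)"
  define B where "B = (\<Sum>j=Suc a..n. e j)"
  define GL where "GL = (\<Sum>j=0..a. e j * G j)"
  define GR where "GR = (\<Sum>j=Suc a..n. e j * G j)"
  define U where "U = (\<Sum>j=0..a. e j * (real a - real j))"
  define V where "V = (\<Sum>j=Suc a..n. e j * (real j - real a))"
  have y01: "0 < y" "y < 1" using \<beta> by (simp_all add: y_def)
  have e0: "e j > 0" for j by (simp add: e_def heat_bath_weight_pos)
  have A0: "A > 0" unfolding A_def using e0 by (intro sum_pos) auto
  have B0: "B \<ge> 0" unfolding B_def using e0 by (intro sum_nonneg) (auto intro: less_imp_le)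
  have C: "C \<ge> 0" using G[of 0 1] an by simp
  have split: "(\<Sum>j=0..n. f j) = (\<Sum>j=0..a. f j) + (\<Sum>j=Suc a..n. f j)" for f :: "nat \<Rightarrow> real"
    using sum.ub_add_nat[of 0 a f "n - a"] an by simp
  have mean: "(\<Sum>j=0..n. heat_bath_prob \<beta> n a b j * G j) = (GL + GR) / (A + B)"
  proof -
    have "(\<Sum>j=0..n. heat_bath_prob \<beta> n a b j * G j) = (\<Sum>j=0..n. e j * G j) / (\<Sum>j=0..n. e j)"
      unfolding heat_bath_prob_def e_def by (simp add: sum_divide_distrib)
    then show ?thesis unfolding split[of e] split[of "\<lambda>j. e j * G j"] A_def B_def GL_def GR_def .
  qed
  have mean_Suc: "(\<Sum>j=0..n. heat_bath_prob \<beta> n (Suc a) b j * G j) = (y * GL + GR) / (y * A + B)"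
    using heat_bath_mean_Suc[OF an] unfolding A_def B_def GL_def GR_def e_def y_def .
  have cross: "\<bar>A * GR - B * GL\<bar> \<le> C * (B * U + A * V)"
    unfolding A_def B_def GL_def GR_def U_def V_def
  proof (rule cross_sum_lipschitz_le)
    show "e j \<ge> 0" for j using e0[of j] by simp
    show "\<bar>G j - G i\<bar> \<le> C * (real j - real i)" if "i \<le> a" "a < j" "j \<le> n" for i j
      using G[of j i] that by simp
  qed
  have moment: "2 * (1-y) * (B * U + A * V) \<le> (A + B) * (y * A + B)"
    using heat_bath_moment_ineq[OF \<beta> an bn] unfolding A_def B_def U_def V_def e_def y_def .
  have yAB: "y * A + B > 0" using y01 A0 B0 by (simp add: add_pos_nonneg)
  have "(y * GL + GR) / (y * A + B) - (GL + GR) / (A + B) = (1-y) * (A * GR - B * GL) / ((A + B) * (y * A + B))"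
    using yAB A0 B0 by (simp add: field_simps)
  then have "\<bar>(\<Sum>j=0..n. heat_bath_prob \<beta> n (Suc a) b j * G j) - (\<Sum>j=0..n. heat_bath_prob \<beta> n a b j * G j)\<bar>
      = (1-y) * \<bar>A * GR - B * GL\<bar> / ((A + B) * (y * A + B))"
    unfolding mean mean_Suc using y01 yAB A0 B0 by (simp add: abs_mult abs_divide)
  also have "\<dots> \<le> (1-y) * (C * (B * U + A * V)) / ((A + B) * (y * A + B))"
    using cross y01 yAB A0 B0 by (intro divide_right_mono mult_left_mono) auto
  also have "\<dots> \<le> C / 2"
  proof -
    have "(1-y) * (C * (B * U + A * V)) \<le> C / 2 * ((A + B) * (y * A + B))"
      using mult_left_mono[OF moment C] by (simp add: algebra_simps)
    then show ?thesis using yAB A0 B0 by (simp add: pos_divide_le_eq)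
  qed
  finally show ?thesis .
qed

section \<open>The Gibbs measure and the column dynamics\<close>

lemma sos_Omega_le: "\<eta> \<in> sos_Omega n \<Longrightarrow> \<eta> m \<le> n"
  unfolding sos_Omega_def by (cases "m \<in> {1..n}") auto

lemma sos_Omega_outside: "\<eta> \<in> sos_Omega n \<Longrightarrow> m \<notin> {1..n} \<Longrightarrow> \<eta> m = 0"
  unfolding sos_Omega_def by auto

lemma sos_Omega_upd: "\<eta> \<in> sos_Omega n \<Longrightarrow> k \<in> {1..n} \<Longrightarrow> j \<le> n \<Longrightarrow> \<eta>(k := j) \<in> sos_Omega n"
  unfolding sos_Omega_def by auto

lemma finite_sos_Omega: "finite (sos_Omega n)"
proof (rule finite_subset)
  show "sos_Omega n \<subseteq> {f. \<forall>x. (x \<in> {1..n} \<longrightarrow> f x \<in> {0..n}) \<and> (x \<notin> {1..n} \<longrightarrow> f x = 0)}"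
    unfolding sos_Omega_def by auto
  show "finite {f. \<forall>x. (x \<in> {1..n} \<longrightarrow> f x \<in> {0..n}) \<and> (x \<notin> {1..n} \<longrightarrow> (f x::nat) = 0)}"
    by (rule finite_set_of_finite_funs) auto
qed

lemma sos_weight_pos: "sos_weight \<beta> n \<eta> > 0"
  by (simp add: sos_weight_def)

lemma sos_partition_pos: "(\<Sum>\<zeta>\<in>sos_Omega n. sos_weight \<beta> n \<zeta>) > 0"
proof (rule sum_pos2[where i="\<lambda>_. 0"])
  show "(\<lambda>_. 0) \<in> sos_Omega n" unfolding sos_Omega_def by simp
qed (auto simp: finite_sos_Omega sos_weight_pos less_imp_le)

lemma sos_mu_pos: "\<eta> \<in> sos_Omega n \<Longrightarrow> sos_mu \<beta> n \<eta> > 0"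
  using sos_partition_pos sos_weight_pos by (simp add: sos_mu_def)

lemma sos_mu_nonneg: "sos_mu \<beta> n \<eta> \<ge> 0"
  using sos_mu_pos[of \<eta> n \<beta>] by (cases "\<eta> \<in> sos_Omega n") (auto simp: sos_mu_def)

lemma sum_sos_mu: "(\<Sum>\<eta>\<in>sos_Omega n. sos_mu \<beta> n \<eta>) = 1"
  using sos_partition_pos[of \<beta> n] by (simp add: sos_mu_def sum_divide_distrib[symmetric])

lemma sos_energy_upd:
  fixes \<zeta> :: "nat \<Rightarrow> nat"
  assumes i: "i \<in> {1..n}"
  shows "(\<Sum>m=1..n+1. \<bar>real ((\<zeta>(i:=j)) (m - 1)) - real ((\<zeta>(i:=j)) m)\<bar>)
    = (\<Sum>m\<in>{1..n+1} - {i, i+1}. \<bar>real (\<zeta> (m - 1)) - real (\<zeta> m)\<bar>)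
      + (\<bar>real (\<zeta> (i-1)) - real j\<bar> + \<bar>real j - real (\<zeta> (i+1))\<bar>)"
proof -
  let ?f = "\<lambda>m. \<bar>real ((\<zeta>(i:=j)) (m - 1)) - real ((\<zeta>(i:=j)) m)\<bar>"
  have "(\<Sum>m=1..n+1. ?f m) = ?f i + (\<Sum>m\<in>{1..n+1} - {i}. ?f m)"
    using i by (intro sum.remove) auto
  also have "(\<Sum>m\<in>{1..n+1} - {i}. ?f m) = ?f (i+1) + (\<Sum>m\<in>{1..n+1} - {i} - {i+1}. ?f m)"
    using i by (intro sum.remove) auto
  also have "{1..n+1} - {i} - {i+1} = {1..n+1} - {i, i+1}" by auto
  also have "(\<Sum>m\<in>{1..n+1} - {i, i+1}. ?f m) = (\<Sum>m\<in>{1..n+1} - {i, i+1}. \<bar>real (\<zeta> (m - 1)) - real (\<zeta> m)\<bar>)"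
    by (rule sum.cong) auto
  also have "?f i = \<bar>real (\<zeta> (i-1)) - real j\<bar>" using i by auto
  also have "?f (i+1) = \<bar>real j - real (\<zeta> (i+1))\<bar>" by simp
  finally show ?thesis by simp
qed

lemma sos_weight_upd:
  assumes i: "i \<in> {1..n}"
  shows "sos_weight \<beta> n (\<zeta>(i:=j))
    = exp (-\<beta> * (\<Sum>m\<in>{1..n+1} - {i, i+1}. \<bar>real (\<zeta> (m - 1)) - real (\<zeta> m)\<bar>))
      * heat_bath_weight \<beta> (\<zeta> (i-1)) (\<zeta> (i+1)) j"
  unfolding sos_weight_def sos_energy_upd[OF i] heat_bath_weight_def
  by (simp add: algebra_simps flip: exp_add)

lemma sos_mu_resample_eq_heat_bath_prob:
  assumes z: "\<zeta> \<in> sos_Omega n" and i: "i \<in> {1..n}" and j: "j \<le> n"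
  shows "sos_mu \<beta> n (\<zeta>(i:=j)) / (\<Sum>k=0..n. sos_mu \<beta> n (\<zeta>(i:=k)))
    = heat_bath_prob \<beta> n (\<zeta> (i-1)) (\<zeta> (i+1)) j"
proof -
  define E where "E = exp (-\<beta> * (\<Sum>m\<in>{1..n+1} - {i, i+1}. \<bar>real (\<zeta> (m - 1)) - real (\<zeta> m)\<bar>))"
  define Z where "Z = (\<Sum>\<zeta>\<in>sos_Omega n. sos_weight \<beta> n \<zeta>)"
  define w where "w = heat_bath_weight \<beta> (\<zeta> (i-1)) (\<zeta> (i+1))"
  have E0: "E > 0" and Z0: "Z > 0" using sos_partition_pos by (simp_all add: E_def Z_def)
  have mu: "sos_mu \<beta> n (\<zeta>(i:=k)) = E * w k / Z" if "k \<le> n" for k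
    using sos_Omega_upd[OF z i that] sos_weight_upd[OF i] unfolding sos_mu_def E_def Z_def w_def by auto
  have "(\<Sum>k=0..n. sos_mu \<beta> n (\<zeta>(i:=k))) = E / Z * (\<Sum>k=0..n. w k)"
    by (simp add: mu sum_distrib_left sum_divide_distrib)
  then show ?thesis using E0 Z0 j unfolding heat_bath_prob_def w_def[symmetric] by (simp add: mu)
qed

definition col_resample :: "real \<Rightarrow> nat \<Rightarrow> ((nat \<Rightarrow> nat) \<Rightarrow> real) \<Rightarrow> (nat \<Rightarrow> nat) \<Rightarrow> nat \<Rightarrow> real" where
  "col_resample \<beta> n g \<zeta> i = (\<Sum>j=0..n. heat_bath_prob \<beta> n (\<zeta> (i-1)) (\<zeta> (i+1)) j * g (\<zeta>(i:=j)))"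

definition col_op :: "real \<Rightarrow> nat \<Rightarrow> ((nat \<Rightarrow> nat) \<Rightarrow> real) \<Rightarrow> (nat \<Rightarrow> nat) \<Rightarrow> real" where
  "col_op \<beta> n g \<zeta> = (\<Sum>i=1..n. col_resample \<beta> n g \<zeta> i) / real n"

lemma sum_col_P_mult:
  assumes z: "\<zeta> \<in> sos_Omega n"
  shows "(\<Sum>\<eta>\<in>sos_Omega n. col_P \<beta> n \<zeta> \<eta> * g \<eta>) = col_op \<beta> n g \<zeta>"
proof -
  define q where "q i j = sos_mu \<beta> n (\<zeta>(i := j)) / (\<Sum>k=0..n. sos_mu \<beta> n (\<zeta>(i := k)))" for i j
  have "(\<Sum>\<eta>\<in>sos_Omega n. col_P \<beta> n \<zeta> \<eta> * g \<eta>)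
     = (\<Sum>\<eta>\<in>sos_Omega n. \<Sum>i=1..n. (1/real n) * (\<Sum>j=0..n. (if \<eta> = \<zeta>(i:=j) then q i j * g \<eta> else 0)))"
    unfolding col_P_def q_def sum_distrib_right by (intro sum.cong refl) (simp add: sum_distrib_right, intro sum.cong refl, simp)
  also have "\<dots> = (\<Sum>i=1..n. (1/real n) * (\<Sum>j=0..n. \<Sum>\<eta>\<in>sos_Omega n. (if \<eta> = \<zeta>(i:=j) then q i j * g \<eta> else 0)))"
    unfolding sum_distrib_left by (subst sum.swap, rule sum.cong[OF refl], rule sum.swap)
  also have "\<dots> = (\<Sum>i=1..n. (1/real n) * (\<Sum>j=0..n. q i j * g (\<zeta>(i:=j))))"
    using sos_Omega_upd[OF z] by (intro sum.cong refl arg_cong2[where f="(*)"]) (auto simp: finite_sos_Omega)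
  also have "\<dots> = col_op \<beta> n g \<zeta>"
    unfolding col_op_def col_resample_def sum_distrib_left[symmetric]
    by (auto intro!: sum.cong simp: q_def sos_mu_resample_eq_heat_bath_prob[OF z])
  finally show ?thesis .
qed

lemma sum_col_law_mult:
  assumes "\<xi> \<in> sos_Omega n"
  shows "(\<Sum>\<eta>\<in>sos_Omega n. col_law \<beta> n t \<xi> \<eta> * g \<eta>) = (col_op \<beta> n ^^ t) g \<xi>"
proof (induction t arbitrary: g)
  case 0
  have "(\<Sum>\<eta>\<in>sos_Omega n. col_law \<beta> n 0 \<xi> \<eta> * g \<eta>) = (\<Sum>\<eta>\<in>sos_Omega n. if \<eta> = \<xi> then g \<eta> else 0)"
    by (intro sum.cong) auto
  then show ?case using assms by (simp add: finite_sos_Omega)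
next
  case (Suc t)
  have "(\<Sum>\<eta>\<in>sos_Omega n. col_law \<beta> n (Suc t) \<xi> \<eta> * g \<eta>)
      = (\<Sum>\<zeta>\<in>sos_Omega n. col_law \<beta> n t \<xi> \<zeta> * (\<Sum>\<eta>\<in>sos_Omega n. col_P \<beta> n \<zeta> \<eta> * g \<eta>))"
    unfolding col_law.simps(2) sum_distrib_right sum_distrib_left mult.assoc by (rule sum.swap)
  also have "\<dots> = (\<Sum>\<zeta>\<in>sos_Omega n. col_law \<beta> n t \<xi> \<zeta> * col_op \<beta> n g \<zeta>)"
    by (intro sum.cong refl) (simp add: sum_col_P_mult)
  also have "\<dots> = (col_op \<beta> n ^^ Suc t) g \<xi>"
    unfolding Suc by (simp only: funpow_Suc_right o_apply)
  finally show ?case .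
qed

text \<open>The swap \<open>(\<zeta>, j) \<mapsto> (\<zeta>(i := j), \<zeta> i)\<close> is an involution of \<open>sos_Omega n \<times> {0..n}\<close> that
  leaves the normaliser \<open>T\<close> unchanged, so it exchanges the two sides (detailed balance).\<close>

lemma sos_mu_col_resample_invariant:
  assumes i: "i \<in> {1..n}"
  shows "(\<Sum>\<zeta>\<in>sos_Omega n. sos_mu \<beta> n \<zeta> * col_resample \<beta> n g \<zeta> i) = (\<Sum>\<zeta>\<in>sos_Omega n. sos_mu \<beta> n \<zeta> * g \<zeta>)"
proof -
  let ?\<Omega> = "sos_Omega n"
  let ?m = "sos_mu \<beta> n"
  define T where "T \<zeta> = (\<Sum>k=0..n. ?m (\<zeta>(i := k)))" for \<zeta> :: "nat \<Rightarrow> nat"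
  define F where "F p = ?m (fst p) * (?m ((fst p)(i := snd p)) / T (fst p)) * g ((fst p)(i := snd p))" for p
  define \<phi> where "\<phi> p = ((fst p)(i := snd p), fst p i)" for p :: "(nat \<Rightarrow> nat) \<times> nat"
  have T_upd: "T (\<zeta>(i:=j)) = T \<zeta>" for \<zeta> j by (simp add: T_def)
  have T_pos: "T \<zeta> > 0" if z: "\<zeta> \<in> ?\<Omega>" for \<zeta>
    unfolding T_def using sos_mu_pos[OF z] sos_Omega_le[OF z]
    by (intro sum_pos2[where i="\<zeta> i"]) (auto simp: sos_mu_nonneg)
  have "(\<Sum>\<zeta>\<in>?\<Omega>. ?m \<zeta> * col_resample \<beta> n g \<zeta> i) = (\<Sum>\<zeta>\<in>?\<Omega>. \<Sum>j\<in>{0..n}. F (\<zeta>, j))"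
    unfolding col_resample_def
    by (intro sum.cong refl) (auto simp: F_def T_def sum_distrib_left mult.assoc
        sos_mu_resample_eq_heat_bath_prob[OF _ i])
  also have "\<dots> = (\<Sum>p\<in>?\<Omega> \<times> {0..n}. F p)" unfolding sum.cartesian_product by simp
  also have "\<dots> = (\<Sum>p\<in>?\<Omega> \<times> {0..n}. F (\<phi> p))"
    by (rule sum.reindex_bij_witness[where i=\<phi> and j=\<phi>])
      (auto simp: \<phi>_def intro: sos_Omega_upd[OF _ i] dest: sos_Omega_le)
  also have "\<dots> = (\<Sum>\<zeta>\<in>?\<Omega>. \<Sum>j\<in>{0..n}. F (\<phi> (\<zeta>, j)))" unfolding sum.cartesian_product by simp
  also have "\<dots> = (\<Sum>\<zeta>\<in>?\<Omega>. ?m \<zeta> * g \<zeta>)"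
  proof (rule sum.cong[OF refl])
    fix \<zeta> assume z: "\<zeta> \<in> ?\<Omega>"
    have "(\<Sum>j\<in>{0..n}. F (\<phi> (\<zeta>, j))) = (\<Sum>j\<in>{0..n}. ?m (\<zeta>(i:=j)) * (?m \<zeta> / T \<zeta> * g \<zeta>))"
      by (intro sum.cong refl) (simp add: F_def \<phi>_def T_upd algebra_simps)
    also have "\<dots> = T \<zeta> * (?m \<zeta> / T \<zeta> * g \<zeta>)" by (simp only: T_def sum_distrib_right)
    also have "\<dots> = ?m \<zeta> * g \<zeta>" using T_pos[OF z] by simp
    finally show "(\<Sum>j\<in>{0..n}. F (\<phi> (\<zeta>, j))) = ?m \<zeta> * g \<zeta>" .
  qed
  finally show ?thesis .
qed

lemma sos_mu_col_op_invariant: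
  assumes n: "n \<ge> 1"
  shows "(\<Sum>\<zeta>\<in>sos_Omega n. sos_mu \<beta> n \<zeta> * col_op \<beta> n g \<zeta>) = (\<Sum>\<zeta>\<in>sos_Omega n. sos_mu \<beta> n \<zeta> * g \<zeta>)"
proof -
  have "(\<Sum>\<zeta>\<in>sos_Omega n. sos_mu \<beta> n \<zeta> * col_op \<beta> n g \<zeta>)
      = (\<Sum>i=1..n. \<Sum>\<zeta>\<in>sos_Omega n. sos_mu \<beta> n \<zeta> * col_resample \<beta> n g \<zeta> i) / real n"
    unfolding col_op_def sum_divide_distrib sum_distrib_left times_divide_eq_right
    by (subst sum.swap) (rule refl)
  also have "\<dots> = (\<Sum>i=1..n. \<Sum>\<zeta>\<in>sos_Omega n. sos_mu \<beta> n \<zeta> * g \<zeta>) / real n"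
    by (simp add: sos_mu_col_resample_invariant)
  also have "\<dots> = (\<Sum>\<zeta>\<in>sos_Omega n. sos_mu \<beta> n \<zeta> * g \<zeta>)" using n by simp
  finally show ?thesis .
qed

lemma sos_mu_col_op_iter_invariant:
  assumes n: "n \<ge> 1"
  shows "(\<Sum>\<zeta>\<in>sos_Omega n. sos_mu \<beta> n \<zeta> * (col_op \<beta> n ^^ t) g \<zeta>) = (\<Sum>\<zeta>\<in>sos_Omega n. sos_mu \<beta> n \<zeta> * g \<zeta>)"
  by (induction t) (simp_all add: sos_mu_col_op_invariant[OF n])

section \<open>A weighted distance between configurations\<close>

definition site_weight :: "nat \<Rightarrow> nat \<Rightarrow> real" where
  "site_weight n k = real k * (real n + 1 - real k)"

definition weighted_dist :: "nat \<Rightarrow> (nat \<Rightarrow> nat) \<Rightarrow> (nat \<Rightarrow> nat) \<Rightarrow> real" where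
  "weighted_dist n \<eta> \<eta>' = (\<Sum>k=1..n. site_weight n k * \<bar>real (\<eta> k) - real (\<eta>' k)\<bar>)"

definition weighted_lipschitz :: "nat \<Rightarrow> real \<Rightarrow> ((nat \<Rightarrow> nat) \<Rightarrow> real) \<Rightarrow> bool" where
  "weighted_lipschitz n L f \<longleftrightarrow>
     (\<forall>\<eta>\<in>sos_Omega n. \<forall>\<eta>'\<in>sos_Omega n. \<bar>f \<eta> - f \<eta>'\<bar> \<le> L * weighted_dist n \<eta> \<eta>')"

lemma site_weight_nonneg: "k \<le> n + 1 \<Longrightarrow> site_weight n k \<ge> 0"
  unfolding site_weight_def by (intro mult_nonneg_nonneg) auto

lemma site_weight_ge: "k \<in> {1..n} \<Longrightarrow> site_weight n k \<ge> real n"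
proof -
  assume k: "k \<in> {1..n}"
  have "site_weight n k - real n = (real k - 1) * (real n - real k)"
    unfolding site_weight_def by (simp add: algebra_simps)
  also have "\<dots> \<ge> 0" using k by (intro mult_nonneg_nonneg) auto
  finally show ?thesis by simp
qed

lemma site_weight_le: "k \<in> {1..n} \<Longrightarrow> site_weight n k \<le> real n ^ 2"
  unfolding site_weight_def power2_eq_square by (intro mult_mono) auto

lemma weighted_dist_upd:
  assumes m: "m \<in> {1..n}"
  shows "weighted_dist n \<eta> (\<eta>(m := v)) = site_weight n m * \<bar>real (\<eta> m) - real v\<bar>"
proof -
  have "weighted_dist n \<eta> (\<eta>(m := v)) = (\<Sum>k=1..n. if k = m then site_weight n m * \<bar>real (\<eta> m) - real v\<bar> else 0)"
    unfolding weighted_dist_def by (rule sum.cong) auto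
  then show ?thesis using m by simp
qed

lemma weighted_dist_ge:
  assumes "\<eta> \<in> sos_Omega n" "\<eta>' \<in> sos_Omega n" "\<eta> \<noteq> \<eta>'"
  shows "weighted_dist n \<eta> \<eta>' \<ge> real n"
proof -
  obtain k where k: "\<eta> k \<noteq> \<eta>' k" using assms(3) by auto
  have kin: "k \<in> {1..n}" using k sos_Omega_outside assms(1,2) by metis
  have "real n \<le> site_weight n k * 1" using site_weight_ge[OF kin] by simp
  also have "\<dots> \<le> site_weight n k * \<bar>real (\<eta> k) - real (\<eta>' k)\<bar>"
    using k site_weight_ge[OF kin] by (intro mult_left_mono) auto
  also have "\<dots> \<le> weighted_dist n \<eta> \<eta>'" unfolding weighted_dist_def using kin
    by (rule member_le_sum) (auto intro!: mult_nonneg_nonneg site_weight_nonneg)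
  finally show ?thesis .
qed

lemma weighted_dist_le:
  assumes "\<eta> \<in> sos_Omega n" "\<eta>' \<in> sos_Omega n"
  shows "weighted_dist n \<eta> \<eta>' \<le> real n ^ 4"
proof -
  have "weighted_dist n \<eta> \<eta>' \<le> (\<Sum>k=1..n. real n^2 * real n)" unfolding weighted_dist_def
  proof (rule sum_mono)
    fix k assume k: "k \<in> {1..n}"
    have "\<bar>real (\<eta> k) - real (\<eta>' k)\<bar> \<le> real n"
      using sos_Omega_le[OF assms(1), of k] sos_Omega_le[OF assms(2), of k] by (simp add: abs_le_iff)
    then show "site_weight n k * \<bar>real (\<eta> k) - real (\<eta>' k)\<bar> \<le> real n^2 * real n"
      using site_weight_le[OF k] site_weight_ge[OF k] by (intro mult_mono) auto
  qed
  also have "\<dots> = real n ^ 4" by (simp add: power_def)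
  finally show ?thesis .
qed

definition height_dist :: "nat \<Rightarrow> (nat \<Rightarrow> nat) \<Rightarrow> (nat \<Rightarrow> nat) \<Rightarrow> nat" where
  "height_dist n \<eta> \<eta>' = (\<Sum>k=1..n. (\<eta> k - \<eta>' k) + (\<eta>' k - \<eta> k))"

lemma height_dist_eq_0:
  assumes "\<eta> \<in> sos_Omega n" "\<eta>' \<in> sos_Omega n" "height_dist n \<eta> \<eta>' = 0"
  shows "\<eta> = \<eta>'"
proof
  fix k
  show "\<eta> k = \<eta>' k"
  proof (cases "k \<in> {1..n}")
    case True
    then have "(\<eta> k - \<eta>' k) + (\<eta>' k - \<eta> k) = 0" using assms(3) unfolding height_dist_def by simp
    then show ?thesis by simp
  qed (use sos_Omega_outside assms(1,2) in metis)
qed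

lemma dist_step_towards:
  assumes i: "i \<in> {1..n}" and v: "v = \<eta> i + 1 \<and> \<eta> i < \<eta>' i \<or> \<eta> i = v + 1 \<and> \<eta>' i < \<eta> i"
  shows "height_dist n \<eta> \<eta>' = height_dist n (\<eta>(i := v)) \<eta>' + 1"
    and "weighted_dist n \<eta> \<eta>' = weighted_dist n (\<eta>(i := v)) \<eta>' + site_weight n i"
proof -
  have "height_dist n \<eta> \<eta>'
      = (\<Sum>k=1..n. ((\<eta>(i:=v)) k - \<eta>' k) + (\<eta>' k - (\<eta>(i:=v)) k) + (if k = i then 1 else 0))"
    unfolding height_dist_def using v by (intro sum.cong) auto
  then show "height_dist n \<eta> \<eta>' = height_dist n (\<eta>(i := v)) \<eta>' + 1"
    using i by (simp add: sum.distrib height_dist_def)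
  have "weighted_dist n \<eta> \<eta>'
      = (\<Sum>k=1..n. site_weight n k * \<bar>real ((\<eta>(i:=v)) k) - real (\<eta>' k)\<bar> + (if k = i then site_weight n i else 0))"
    unfolding weighted_dist_def using v by (intro sum.cong) (auto simp: algebra_simps)
  then show "weighted_dist n \<eta> \<eta>' = weighted_dist n (\<eta>(i := v)) \<eta>' + site_weight n i"
    using i by (simp add: sum.distrib weighted_dist_def)
qed

lemma weighted_lipschitz_of_adjacent:
  assumes adj: "\<And>\<zeta> i. \<zeta> \<in> sos_Omega n \<Longrightarrow> i \<in> {1..n} \<Longrightarrow> \<zeta> i < n \<Longrightarrow>
      \<bar>f \<zeta> - f (\<zeta>(i := \<zeta> i + 1))\<bar> \<le> L * site_weight n i"
  shows "weighted_lipschitz n L f"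
proof -
  have "\<bar>f \<eta> - f \<eta>'\<bar> \<le> L * weighted_dist n \<eta> \<eta>'"
    if "\<eta> \<in> sos_Omega n" "\<eta>' \<in> sos_Omega n" "height_dist n \<eta> \<eta>' = D" for D \<eta> \<eta>'
    using that
  proof (induction D arbitrary: \<eta> rule: less_induct)
    case (less D)
    note e = less.prems(1) and e' = less.prems(2)
    show ?case
    proof (cases "\<eta> = \<eta>'")
      case False
      then obtain i where i: "i \<in> {1..n}" and ne: "\<eta> i \<noteq> \<eta>' i"
        using height_dist_eq_0[OF e e'] unfolding height_dist_def by fastforce
      define v where "v = (if \<eta> i < \<eta>' i then \<eta> i + 1 else \<eta> i - 1)"
      define \<zeta> where "\<zeta> = \<eta>(i := v)"
      have v: "v = \<eta> i + 1 \<and> \<eta> i < \<eta>' i \<or> \<eta> i = v + 1 \<and> \<eta>' i < \<eta> i"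
        using ne by (auto simp: v_def)
      have vn: "v \<le> n" using v sos_Omega_le[OF e', of i] sos_Omega_le[OF e, of i] by auto
      have z: "\<zeta> \<in> sos_Omega n" unfolding \<zeta>_def using e i vn by (rule sos_Omega_upd)
      note steps = dist_step_towards[where \<eta>=\<eta> and \<eta>'=\<eta>' and v=v, OF i v, folded \<zeta>_def]
      have "\<bar>f \<zeta> - f \<eta>'\<bar> \<le> L * weighted_dist n \<zeta> \<eta>'"
        using less.IH[of "height_dist n \<zeta> \<eta>'"] steps(1) less.prems z e' by auto
      moreover have "\<bar>f \<eta> - f \<zeta>\<bar> \<le> L * site_weight n i"
      proof (cases "\<eta> i < \<eta>' i")
        case True
        then show ?thesis using adj[OF e i] vn by (simp add: \<zeta>_def v_def)
      next
        case False
        then have "\<zeta>(i := \<zeta> i + 1) = \<eta>" "\<zeta> i < n" using v sos_Omega_le[OF e, of i] by (auto simp: \<zeta>_def)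
        then show ?thesis using adj[OF z i] by (simp add: abs_minus_commute)
      qed
      ultimately show ?thesis using steps(2) by (simp add: algebra_simps)
    qed (simp add: weighted_dist_def)
  qed
  then show ?thesis unfolding weighted_lipschitz_def by blast
qed

section \<open>Contraction and mixing\<close>

lemma col_resample_adjacent_diff_le:
  assumes \<beta>: "\<beta> > 0" and g: "weighted_lipschitz n L g"
    and z: "\<zeta> \<in> sos_Omega n" and i: "i \<in> {1..n}" and zi: "\<zeta> i < n"
    and k: "k \<in> {1..n}" and ki: "k \<noteq> i"
  shows "\<bar>col_resample \<beta> n g \<zeta> k - col_resample \<beta> n g (\<zeta>(i := \<zeta> i + 1)) k\<bar>
    \<le> L * site_weight n i + L * (if k = i + 1 \<or> k + 1 = i then site_weight n k / 2 else 0)"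
proof -
  define \<zeta>' where "\<zeta>' = \<zeta>(i := \<zeta> i + 1)"
  have z': "\<zeta>' \<in> sos_Omega n" unfolding \<zeta>'_def using z i zi by (intro sos_Omega_upd) auto
  have lip: "\<bar>g \<eta> - g \<eta>'\<bar> \<le> L * weighted_dist n \<eta> \<eta>'" if "\<eta> \<in> sos_Omega n" "\<eta>' \<in> sos_Omega n" for \<eta> \<eta>'
    using g that unfolding weighted_lipschitz_def by blast
  define c where "c = heat_bath_prob \<beta> n (\<zeta> (k-1)) (\<zeta> (k+1))"
  define c' where "c' = heat_bath_prob \<beta> n (\<zeta>' (k-1)) (\<zeta>' (k+1))"
  define G where "G j = g (\<zeta>'(k := j))" for j
  have split: "col_resample \<beta> n g \<zeta> k - col_resample \<beta> n g \<zeta>' k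
      = (\<Sum>j=0..n. (g (\<zeta>(k := j)) - G j) * c j) + ((\<Sum>j=0..n. c j * G j) - (\<Sum>j=0..n. c' j * G j))"
    unfolding col_resample_def c_def c'_def G_def by (simp add: algebra_simps sum_subtractf sum.distrib)
  have same_kernel: "\<bar>\<Sum>j=0..n. (g (\<zeta>(k := j)) - G j) * c j\<bar> \<le> L * site_weight n i"
  proof -
    have "\<bar>(\<Sum>j\<in>{0..n}. (g (\<zeta>(k := j)) - G j) * c j) - 0\<bar> \<le> L * site_weight n i"
    proof (rule convex_sum_bound_le)
      show "0 \<le> c j" for j by (simp add: c_def heat_bath_prob_nonneg)
      show "sum c {0..n} = 1" by (simp add: c_def sum_heat_bath_prob)
      fix j assume j: "j \<in> {0..n}"
      have "\<zeta>'(k := j) = (\<zeta>(k := j))(i := (\<zeta>(k := j)) i + 1)"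
        unfolding \<zeta>'_def using ki by (auto simp: fun_upd_twist)
      then have "weighted_dist n (\<zeta>(k := j)) (\<zeta>'(k := j)) = site_weight n i"
        by (simp add: weighted_dist_upd[OF i])
      then show "\<bar>g (\<zeta>(k := j)) - G j - 0\<bar> \<le> L * site_weight n i"
        unfolding G_def using lip sos_Omega_upd[OF z k] sos_Omega_upd[OF z' k] j by fastforce
    qed
    then show ?thesis by simp
  qed
  have G_lip: "\<bar>G j - G j'\<bar> \<le> (L * site_weight n k) * \<bar>real j - real j'\<bar>" if "j \<le> n" "j' \<le> n" for j j'
  proof -
    have "\<bar>G j - G j'\<bar> \<le> L * weighted_dist n (\<zeta>'(k := j)) (\<zeta>'(k := j'))"
      unfolding G_def using lip sos_Omega_upd[OF z' k] that by blast
    also have "weighted_dist n (\<zeta>'(k := j)) (\<zeta>'(k := j')) = site_weight n k * \<bar>real j - real j'\<bar>"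
      using weighted_dist_upd[OF k, of "\<zeta>'(k := j)" j'] by simp
    finally show ?thesis by (simp add: mult.assoc)
  qed
  have kernel_shift: "\<bar>(\<Sum>j=0..n. c j * G j) - (\<Sum>j=0..n. c' j * G j)\<bar>
      \<le> L * (if k = i + 1 \<or> k + 1 = i then site_weight n k / 2 else 0)"
  proof (cases "k = i + 1 \<or> k + 1 = i")
    case True
    have "c = heat_bath_prob \<beta> n (\<zeta> i) (\<zeta> (if k = i + 1 then k + 1 else k - 1))"
      and "c' = heat_bath_prob \<beta> n (Suc (\<zeta> i)) (\<zeta> (if k = i + 1 then k + 1 else k - 1))"
      using True ki unfolding c_def c'_def \<zeta>'_def by (auto simp: heat_bath_prob_commute)
    then show ?thesis
      using heat_bath_mean_shift_le[OF \<beta> zi sos_Omega_le[OF z] G_lip] True by (simp add: abs_minus_commute)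
  next
    case False
    then have "c = c'" using ki unfolding c_def c'_def \<zeta>'_def by auto
    then show ?thesis using False by simp
  qed
  show ?thesis
    unfolding \<zeta>'_def[symmetric] split by (rule order_trans[OF abs_triangle_ineq add_mono[OF same_kernel kernel_shift]])
qed

lemma site_weight_concave:
  assumes "i \<ge> 1"
  shows "site_weight n (i - 1) + site_weight n (i + 1) = 2 * site_weight n i - 2"
  using assms by (simp add: site_weight_def of_nat_diff algebra_simps)

lemma sum_site_weight_neighbours:
  assumes i: "i \<in> {1..n}"
  shows "(\<Sum>k=1..n. if k = i + 1 \<or> k + 1 = i then site_weight n k / 2 else 0) = site_weight n i - 1"
proof -
  have "(\<Sum>k=1..n. if k = i + 1 \<or> k + 1 = i then site_weight n k / 2 else 0)
      = (\<Sum>k=1..n. if k = i + 1 then site_weight n k / 2 else 0)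
        + (\<Sum>k=1..n. if k = i - 1 then site_weight n k / 2 else 0)"
    unfolding sum.distrib[symmetric] using i by (intro sum.cong) auto
  also have "\<dots> = site_weight n (i + 1) / 2 + site_weight n (i - 1) / 2"
  proof -
    have "(\<Sum>k=1..n. if k = i + 1 then site_weight n k / 2 else 0) = site_weight n (i + 1) / 2"
      using i by (cases "i = n") (auto simp: site_weight_def)
    moreover have "(\<Sum>k=1..n. if k = i - 1 then site_weight n k / 2 else 0) = site_weight n (i - 1) / 2"
      using i by (cases "i = 1") (auto simp: site_weight_def)
    ultimately show ?thesis by (simp add: algebra_simps)
  qed
  also have "\<dots> = site_weight n i - 1"
    using site_weight_concave[of i n] i by simp
  finally show ?thesis .
qed

lemma col_op_adjacent_diff_le:
  assumes \<beta>: "\<beta> > 0" and g: "weighted_lipschitz n L g"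
    and z: "\<zeta> \<in> sos_Omega n" and i: "i \<in> {1..n}" and zi: "\<zeta> i < n"
  shows "\<bar>col_op \<beta> n g \<zeta> - col_op \<beta> n g (\<zeta>(i := \<zeta> i + 1))\<bar> \<le> L * (site_weight n i - 1 / real n)"
proof -
  define \<zeta>' where "\<zeta>' = \<zeta>(i := \<zeta> i + 1)"
  define b where "b k = L * site_weight n i - (if k = i then L * site_weight n i else 0)
      + L * (if k = i + 1 \<or> k + 1 = i then site_weight n k / 2 else 0)" for k
  have n: "real n > 0" using i by simp
  have "\<bar>col_resample \<beta> n g \<zeta> k - col_resample \<beta> n g \<zeta>' k\<bar> \<le> b k" if k: "k \<in> {1..n}" for k
  proof (cases "k = i")
    case True
    then have "col_resample \<beta> n g \<zeta> k = col_resample \<beta> n g \<zeta>' k"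
      unfolding col_resample_def \<zeta>'_def using i by (intro sum.cong) auto
    then show ?thesis using True by (simp add: b_def)
  next
    case False
    then show ?thesis
      using col_resample_adjacent_diff_le[OF \<beta> g z i zi k False] unfolding \<zeta>'_def b_def by argo
  qed
  then have "\<bar>\<Sum>k=1..n. col_resample \<beta> n g \<zeta> k - col_resample \<beta> n g \<zeta>' k\<bar> \<le> (\<Sum>k=1..n. b k)"
    by (intro order_trans[OF sum_abs sum_mono])
  moreover have "(\<Sum>k=1..n. b k) = real n * L * (site_weight n i - 1 / real n)"
  proof -
    have "(\<Sum>k=1..n. b k) = real n * L * site_weight n i - L * site_weight n i + L * (site_weight n i - 1)"
      unfolding b_def sum.distrib sum_subtractf sum_distrib_left[symmetric] sum_site_weight_neighbours[OF i]
      using i by simp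
    moreover have "real n * L * (site_weight n i - 1 / real n) = real n * L * site_weight n i - L"
      using n by (simp add: right_diff_distrib)
    ultimately show ?thesis by (simp add: algebra_simps)
  qed
  ultimately show ?thesis
    using n unfolding \<zeta>'_def[symmetric] col_op_def
    by (simp add: sum_subtractf[symmetric] diff_divide_distrib[symmetric] pos_divide_le_eq mult_ac)
qed

lemma weighted_lipschitz_col_op:
  assumes \<beta>: "\<beta> > 0" and L: "L \<ge> 0" and g: "weighted_lipschitz n L g"
  shows "weighted_lipschitz n ((1 - 1 / real n ^ 3) * L) (col_op \<beta> n g)"
proof (rule weighted_lipschitz_of_adjacent)
  fix \<zeta> i assume z: "\<zeta> \<in> sos_Omega n" and i: "i \<in> {1..n}" and zi: "\<zeta> i < n"
  have "site_weight n i / real n ^ 3 \<le> real n ^ 2 / real n ^ 3"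
    using site_weight_le[OF i] by (simp add: divide_right_mono)
  also have "\<dots> = 1 / real n" using i by (simp add: power3_eq_cube power2_eq_square)
  finally have "L * (site_weight n i / real n ^ 3) \<le> L * (1 / real n)"
    using L by (rule mult_left_mono)
  then have "L * (site_weight n i - 1 / real n) \<le> (1 - 1 / real n ^ 3) * L * site_weight n i"
    by (simp add: algebra_simps)
  with col_op_adjacent_diff_le[OF \<beta> g z i zi]
  show "\<bar>col_op \<beta> n g \<zeta> - col_op \<beta> n g (\<zeta>(i := \<zeta> i + 1))\<bar> \<le> (1 - 1 / real n ^ 3) * L * site_weight n i"
    by linarith
qed

lemma weighted_lipschitz_col_op_iter:
  assumes \<beta>: "\<beta> > 0" and L: "L \<ge> 0" and g: "weighted_lipschitz n L g"
  shows "weighted_lipschitz n ((1 - 1 / real n ^ 3) ^ t * L) ((col_op \<beta> n ^^ t) g)"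
proof (induction t)
  case (Suc t)
  have "1 / real n ^ 3 \<le> 1" by (cases n) auto
  then show ?case
    using weighted_lipschitz_col_op[OF \<beta> _ Suc] L by (simp add: mult.assoc)
qed (simp add: g)

lemma weighted_lipschitz_bounded:
  assumes n: "n \<ge> 1" and f: "\<And>\<eta>. \<bar>f \<eta>\<bar> \<le> 1"
  shows "weighted_lipschitz n (2 / real n) f"
  unfolding weighted_lipschitz_def
proof (intro ballI)
  fix \<eta> \<eta>' assume e: "\<eta> \<in> sos_Omega n" "\<eta>' \<in> sos_Omega n"
  show "\<bar>f \<eta> - f \<eta>'\<bar> \<le> 2 / real n * weighted_dist n \<eta> \<eta>'"
  proof (cases "\<eta> = \<eta>'")
    case False
    have "\<bar>f \<eta> - f \<eta>'\<bar> \<le> 2" using f[of \<eta>] f[of \<eta>'] by linarith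
    also have "2 = 2 / real n * real n" using n by simp
    also have "\<dots> \<le> 2 / real n * weighted_dist n \<eta> \<eta>'"
      using weighted_dist_ge[OF e False] by (intro mult_left_mono) auto
    finally show ?thesis .
  qed (simp add: weighted_dist_def)
qed

text \<open>Total variation is tested against the sign of \<open>\<nu> - \<mu>\<close>; moving the test function to time 0 and
  using invariance of \<open>\<mu>\<close> turns it into a difference of values of a function with small
  Lipschitz constant.\<close>

lemma tv_col_law_le:
  assumes \<beta>: "\<beta> > 0" and n: "n \<ge> 1" and \<xi>: "\<xi> \<in> sos_Omega n"
  shows "tv_dist n (col_law \<beta> n t \<xi>) (sos_mu \<beta> n) \<le> (1 - 1 / real n ^ 3) ^ t * real n ^ 3"
proof -
  let ?\<Omega> = "sos_Omega n"
  let ?\<nu> = "col_law \<beta> n t \<xi>"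
  let ?\<mu> = "sos_mu \<beta> n"
  define s where "s \<eta> = (if ?\<nu> \<eta> \<ge> ?\<mu> \<eta> then 1 else (-1::real))" for \<eta>
  define F where "F = (col_op \<beta> n ^^ t) s"
  define \<kappa> where "\<kappa> = (1 - 1 / real n ^ 3) ^ t * (2 / real n)"
  have \<kappa>: "\<kappa> \<ge> 0" unfolding \<kappa>_def using n by simp
  have F: "weighted_lipschitz n \<kappa> F"
    unfolding F_def \<kappa>_def using weighted_lipschitz_bounded[OF n, of s]
    by (intro weighted_lipschitz_col_op_iter[OF \<beta>]) (auto simp: s_def)
  have "tv_dist n ?\<nu> ?\<mu> = ((\<Sum>\<eta>\<in>?\<Omega>. ?\<nu> \<eta> * s \<eta>) - (\<Sum>\<eta>\<in>?\<Omega>. ?\<mu> \<eta> * s \<eta>)) / 2"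
  proof -
    have "(\<Sum>\<eta>\<in>?\<Omega>. \<bar>?\<nu> \<eta> - ?\<mu> \<eta>\<bar>) = (\<Sum>\<eta>\<in>?\<Omega>. ?\<nu> \<eta> * s \<eta> - ?\<mu> \<eta> * s \<eta>)"
      by (rule sum.cong) (auto simp: s_def)
    then show ?thesis unfolding tv_dist_def by (simp add: sum_subtractf)
  qed
  also have "\<dots> = (\<Sum>\<eta>\<in>?\<Omega>. ?\<mu> \<eta> * (F \<xi> - F \<eta>)) / 2"
  proof -
    have "(\<Sum>\<eta>\<in>?\<Omega>. ?\<mu> \<eta> * s \<eta>) = (\<Sum>\<eta>\<in>?\<Omega>. ?\<mu> \<eta> * F \<eta>)"
      unfolding F_def by (rule sos_mu_col_op_iter_invariant[OF n, symmetric])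
    then show ?thesis unfolding sum_col_law_mult[OF \<xi>] F_def[symmetric]
      by (simp add: right_diff_distrib sum_subtractf sum_distrib_right[symmetric] sum_sos_mu)
  qed
  also have "\<dots> \<le> (\<Sum>\<eta>\<in>?\<Omega>. ?\<mu> \<eta> * (\<kappa> * real n ^ 4)) / 2"
  proof (intro divide_right_mono sum_mono mult_left_mono)
    fix \<eta> assume e: "\<eta> \<in> ?\<Omega>"
    have "F \<xi> - F \<eta> \<le> \<kappa> * weighted_dist n \<xi> \<eta>" using F \<xi> e unfolding weighted_lipschitz_def by fastforce
    also have "\<dots> \<le> \<kappa> * real n ^ 4" using weighted_dist_le[OF \<xi> e] \<kappa> by (intro mult_left_mono)
    finally show "F \<xi> - F \<eta> \<le> \<kappa> * real n ^ 4" .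
  qed (auto simp: sos_mu_nonneg)
  also have "\<dots> = (1 - 1 / real n ^ 3) ^ t * real n ^ 3"
    unfolding sum_distrib_right[symmetric] sum_sos_mu \<kappa>_def using n by (simp add: power_def)
  finally show ?thesis .
qed

lemma contraction_factor_small:
  assumes n: "n \<ge> 1"
  shows "(1 - 1 / real n ^ 3) ^ (n ^ 3 * (3 * nat \<lceil>ln (real n)\<rceil> + 2)) * real n ^ 3 \<le> 1 / (2 * exp 1)"
proof -
  define K where "K = 3 * nat \<lceil>ln (real n)\<rceil> + 2"
  have npos: "real n > 0" using n by simp
  have "(1 - 1 / real n ^ 3) ^ (n ^ 3 * K) \<le> exp (- (1 / real n ^ 3)) ^ (n ^ 3 * K)"
    using n exp_ge_add_one_self[of "- (1 / real n ^ 3)"] by (intro power_mono) auto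
  also have "\<dots> = exp (- real K)"
    using npos by (simp add: exp_of_nat_mult[symmetric])
  finally have "(1 - 1 / real n ^ 3) ^ (n ^ 3 * K) * real n ^ 3 \<le> exp (- real K) * real n ^ 3"
    by (simp add: mult_right_mono)
  also have "\<dots> = exp (3 * ln (real n) - real K)"
    using exp_of_nat_mult[of 3 "ln (real n)"] npos by (simp add: exp_diff exp_minus field_simps)
  also have "\<dots> \<le> exp (-2)"
    unfolding K_def using n by simp
  also have "exp (-2::real) \<le> 1 / (2 * exp 1)"
  proof -
    have "exp 1 * 2 \<le> exp 1 * exp (1::real)"
      using exp_ge_add_one_self[of 1] by (intro mult_left_mono) auto
    then show ?thesis by (simp add: exp_minus field_simps flip: exp_add)
  qed
  finally show ?thesis unfolding K_def .
qed

lemma col_mixing_time_le: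
  assumes \<beta>: "\<beta> > 0" and n: "n \<ge> 1"
  shows "col_mixing_time \<beta> n \<le> n ^ 3 * (3 * nat \<lceil>ln (real n)\<rceil> + 2)"
proof (unfold col_mixing_time_def, intro Least_le ballI)
  fix \<xi> assume "\<xi> \<in> sos_Omega n"
  then show "tv_dist n (col_law \<beta> n (n ^ 3 * (3 * nat \<lceil>ln (real n)\<rceil> + 2)) \<xi>) (sos_mu \<beta> n) \<le> 1 / (2 * exp 1)"
    by (rule order_trans[OF tv_col_law_le[OF \<beta> n] contraction_factor_small[OF n]])
qed

theorem theorem3p1:
  fixes \<beta> :: real
  assumes "\<beta> > 0"
  shows "(\<lambda>n. real (col_mixing_time \<beta> n)) \<in> O(\<lambda>n. real n ^ 3 * ln (real n))"
proof (rule bigoI[where c=8])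
  show "\<forall>\<^sub>F n in at_top. norm (real (col_mixing_time \<beta> n)) \<le> 8 * norm (real n ^ 3 * ln (real n))"
  proof (rule eventually_at_top_linorderI[of 3])
    fix n :: nat assume n: "n \<ge> 3"
    have "exp 1 \<le> real n" using exp_le n by linarith
    then have ln: "ln (real n) \<ge> 1" using n by (simp add: ln_ge_iff)
    have "real (col_mixing_time \<beta> n) \<le> real (n ^ 3 * (3 * nat \<lceil>ln (real n)\<rceil> + 2))"
      unfolding of_nat_le_iff using col_mixing_time_le[OF assms, of n] n by simp
    also have "\<dots> = real n ^ 3 * (3 * real (nat \<lceil>ln (real n)\<rceil>) + 2)"
      by (simp only: of_nat_mult of_nat_add of_nat_power of_nat_numeral)
    also have "\<dots> \<le> real n ^ 3 * (8 * ln (real n))"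
    proof (rule mult_left_mono)
      show "3 * real (nat \<lceil>ln (real n)\<rceil>) + 2 \<le> 8 * ln (real n)" using ln by linarith
    qed simp
    finally show "norm (real (col_mixing_time \<beta> n)) \<le> 8 * norm (real n ^ 3 * ln (real n))"
      using ln by (simp add: abs_mult)
  qed
qed

end
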